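(* Let $\mu=\mu_1\otimes\cdots\otimes\mu_n$ be a product probability measure on $\mathbb{R}^n$, where each $\mu_k$ is a probability measure on $\mathbb{R}$ with density $g_k\in L^\infty(\mathbb{R})$. Then for every convex set $A\subset\mathbb{R}^n$, $$\mu^+(\partial A)\leq 2\sum_{k=1}^n\|g_k\|_\infty,$$ and consequently $\Gamma(\mu)\leq 2\sum_{k=1}^n\|g_k\|_\infty$. Moreover, the constant $2$ is optimal (it cannot be replaced by any smaller constant valid for all such product measures).
   Context: $B_2^n$ is the Euclidean unit ball. $\mu^+(\partial A)=\liminf_{\epsilon\to0^+}\frac{\mu((A+\epsilon B_2^n)\setminus A)}{\epsilon}$ and $\Gamma(\mu)=\sup\{\mu^+(\partial A): A \text{ a convex body (compact convex set with nonempty interior)}\}$. *)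

theory Defs
  imports "HOL-Probability.Probability"
begin

definition Linf_norm :: "(real \<Rightarrow> real) \<Rightarrow> ereal" where
  "Linf_norm g = esssup lborel (\<lambda>x. ereal \<bar>g x\<bar>)"

definition bounded_prob_density :: "(real \<Rightarrow> real) \<Rightarrow> bool" where
  "bounded_prob_density g \<longleftrightarrow>
     g \<in> borel_measurable borel \<and> (\<forall>x. 0 \<le> g x) \<and>
     prob_space (density lborel (\<lambda>x. ennreal (g x))) \<and> Linf_norm g < \<infinity>"

definition prod_measure_vec :: "('n::finite \<Rightarrow> real measure) \<Rightarrow> (real^'n) measure" where
  "prod_measure_vec M = distr (\<Pi>\<^sub>M i\<in>UNIV. M i) borel (\<lambda>f. \<chi> i. f i)"

definition prod_density_measure :: "('n::finite \<Rightarrow> real \<Rightarrow> real) \<Rightarrow> (real^'n) measure" where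
  "prod_density_measure g = prod_measure_vec (\<lambda>k. density lborel (\<lambda>x. ennreal (g k x)))"

definition minkowski_enlarge :: "'a::euclidean_space set \<Rightarrow> real \<Rightarrow> 'a set" where
  "minkowski_enlarge A \<epsilon> = {a + \<epsilon> *\<^sub>R b | a b. a \<in> A \<and> b \<in> cball 0 1}"

text \<open>Surface (outer Minkowski) measure mu^+(boundary A).  The measure of the (possibly
  non-Borel) set (A + eps B) - A is taken in the completion of mu.\<close>
definition boundary_measure :: "'a::euclidean_space measure \<Rightarrow> 'a set \<Rightarrow> ereal" where
  "boundary_measure \<mu> A =
     Liminf (at_right 0) (\<lambda>\<epsilon>. ereal (measure (completion \<mu>) (minkowski_enlarge A \<epsilon> - A) / \<epsilon>))"

definition convex_body :: "'a::euclidean_space set \<Rightarrow> bool" where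
  "convex_body A \<longleftrightarrow> compact A \<and> convex A \<and> interior A \<noteq> {}"

definition Gamma :: "'a::euclidean_space measure \<Rightarrow> ereal" where
  "Gamma \<mu> = (SUP A \<in> {A. convex_body A}. boundary_measure \<mu> A)"

end

theory Submission
  imports Defs
begin

text \<open>
  For a convex set \<open>C\<close> and a coordinate direction \<open>k\<close>, Fubini's theorem
  reduces the growth of \<open>\<mu>(C)\<close> under thickening by \<open>[-e, e]\<close> in
  direction \<open>k\<close> to the sections of \<open>C\<close> by lines parallel to the \<open>k\<close>-th
  axis. These are intervals, and thickening an interval adds at most
  \<open>2 e \<parallel>g\<^sub>k\<parallel>\<^sub>\<infinity>\<close> of mass. Thickening coordinate by coordinate,
  \<open>C + [-e, e]\<^sup>n\<close> has measure at most \<open>\<mu>(C) + 2 e \<Sum>\<^sub>k \<parallel>g\<^sub>k\<parallel>\<^sub>\<infinity>\<close>.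
  For \<open>C\<close> the closure of \<open>A\<close> this set contains \<open>A + e B\<^sub>2\<^sup>n\<close>, and the
  frontier of \<open>A\<close> is \<open>\<mu>\<close>-null by the same estimate.

  For sharpness take the uniform measure on \<open>[0, 1]\<^sup>n\<close> and the cube
  \<open>[d, 1 - d]\<^sup>n\<close>: the \<open>2n\<close> slabs of width \<open>e\<close> outside its faces each
  carry mass \<open>e (1 - 2d)\<^sup>n\<^sup>-\<^sup>1\<close>, so its boundary measure is at least
  \<open>2n (1 - 2d)\<^sup>n\<^sup>-\<^sup>1\<close>, while \<open>\<Sum>\<^sub>k \<parallel>g\<^sub>k\<parallel>\<^sub>\<infinity> \<le> n\<close>.
\<close>

section \<open>Product measures on Euclidean space\<close>

lemma measurable_vec_lambda_PiM:
  fixes M :: "'n::finite \<Rightarrow> real measure"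
  assumes "\<And>k. sets (M k) = sets borel"
  shows "(\<lambda>f. \<chi> i. f i) \<in> PiM UNIV M \<rightarrow>\<^sub>M (borel :: (real^'n) measure)"
proof -
  have "(\<lambda>f. f k) \<in> PiM UNIV M \<rightarrow>\<^sub>M borel" for k
    using measurable_component_singleton[of k UNIV M] assms by (simp add: measurable_def)
  then show ?thesis
    by (subst borel_measurable_euclidean_space) (auto simp: Basis_vec_def inner_axis)
qed

lemma sets_prod_measure_vec [simp]: "sets (prod_measure_vec M) = sets borel"
  by (simp add: prod_measure_vec_def)

lemma prob_space_prod_measure_vec:
  assumes "\<And>k. prob_space (M k)" "\<And>k. sets (M k) = sets borel"
  shows "prob_space (prod_measure_vec M)"
proof -
  interpret prob_space "PiM UNIV M" by (rule prob_space_PiM) (use assms in auto)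
  show ?thesis
    unfolding prod_measure_vec_def by (rule prob_space_distr[OF measurable_vec_lambda_PiM[OF assms(2)]])
qed

definition line_section :: "(real^'n) set \<Rightarrow> 'n \<Rightarrow> ('n \<Rightarrow> real) \<Rightarrow> real set" where
  "line_section S k f = {x. (\<chi> i. if i = k then x else f i) \<in> S}"

lemma line_section_borel:
  fixes S :: "(real^'n::finite) set"
  assumes "S \<in> sets borel"
  shows "line_section S k f \<in> sets borel"
proof -
  have "(\<lambda>x. (\<chi> i. if i = k then x else f i) :: real^'n) \<in> borel_measurable borel"
    by (subst borel_measurable_euclidean_space) (auto simp: Basis_vec_def inner_axis)
  from measurable_sets[OF this assms] show ?thesis
    by (simp add: line_section_def vimage_def)
qed

lemma convex_line_section:
  assumes "convex S"
  shows "convex (line_section S k f)"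
  unfolding convex_def line_section_def
proof safe
  fix x y u v :: real
  assume x: "(\<chi> i. if i = k then x else f i) \<in> S" and y: "(\<chi> i. if i = k then y else f i) \<in> S"
    and uv: "0 \<le> u" "0 \<le> v" "u + v = 1"
  have "f i = u * f i + v * f i" for i
    using uv(3) by (metis distrib_right mult_1)
  then have "(\<chi> i. if i = k then u *\<^sub>R x + v *\<^sub>R y else f i)
      = u *\<^sub>R (\<chi> i. if i = k then x else f i) + v *\<^sub>R (\<chi> i. if i = k then y else f i)"
    by (simp add: vec_eq_iff)
  then show "(\<chi> i. if i = k then u *\<^sub>R x + v *\<^sub>R y else f i) \<in> S"
    using convexD[OF assms x y uv] by simp
qed

lemma
  fixes M :: "'n::finite \<Rightarrow> real measure"
  assumes prob: "\<And>k. prob_space (M k)" and sets: "\<And>k. sets (M k) = sets borel"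
    and S: "S \<in> sets borel"
  shows borel_measurable_emeasure_line_section:
      "(\<lambda>f. emeasure (M k) (line_section S k f)) \<in> borel_measurable (PiM (UNIV - {k}) M)"
    and emeasure_prod_measure_vec_line_sections:
      "emeasure (prod_measure_vec M) S = (\<integral>\<^sup>+f. emeasure (M k) (line_section S k f) \<partial>PiM (UNIV - {k}) M)"
proof -
  let ?R = "PiM (UNIV - {k}) M"
  let ?u = "\<lambda>(x, f). f(k := x)"
  let ?vec = "\<lambda>f. \<chi> i. f i"
  have UNIV: "insert k (UNIV - {k}) = UNIV" by auto
  then have distr_u: "distr (M k \<Otimes>\<^sub>M ?R) (PiM UNIV M) ?u = PiM UNIV M"
    using distr_pair_PiM_eq_PiM[of "UNIV - {k}" M k] prob by simp
  have u: "?u \<in> M k \<Otimes>\<^sub>M ?R \<rightarrow>\<^sub>M PiM UNIV M"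
    using measurable_pair_swap[OF measurable_add_dim[where I="UNIV - {k}" and M=M and i=k]] UNIV
    by (simp add: case_prod_beta)
  have space: "space (M i) = UNIV" for i
    using sets_eq_imp_space_eq[OF sets[of i]] by simp
  interpret R: prob_space ?R by (rule prob_space_PiM) (use prob in auto)
  interpret Mk: prob_space "M k" by (rule prob)
  interpret pair_sigma_finite "M k" ?R ..
  let ?Q = "?u -` (?vec -` S \<inter> space (PiM UNIV M)) \<inter> space (M k \<Otimes>\<^sub>M ?R)"
  have vecS: "?vec -` S \<inter> space (PiM UNIV M) \<in> sets (PiM UNIV M)"
    using measurable_sets[OF measurable_vec_lambda_PiM[OF sets] S] .
  have Q: "?Q \<in> sets (M k \<Otimes>\<^sub>M ?R)"
    using measurable_sets[OF u vecS] .
  have sections: "(\<lambda>x. (x, f)) -` ?Q = line_section S k f" if "f \<in> space ?R" for f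
    using that by (auto simp: space_pair_measure space_PiM PiE_def extensional_def fun_upd_def
        line_section_def space)
  show "(\<lambda>f. emeasure (M k) (line_section S k f)) \<in> borel_measurable ?R"
    using measurable_emeasure_Pair2[OF Q]
    by (rule measurable_cong[THEN iffD1, rotated]) (simp only: sections)
  have "emeasure (prod_measure_vec M) S = emeasure (PiM UNIV M) (?vec -` S \<inter> space (PiM UNIV M))"
    unfolding prod_measure_vec_def by (rule emeasure_distr[OF measurable_vec_lambda_PiM[OF sets] S])
  also have "\<dots> = emeasure (M k \<Otimes>\<^sub>M ?R) ?Q"
    by (subst distr_u[symmetric], rule emeasure_distr[OF u]) (simp add: vecS)
  also have "\<dots> = (\<integral>\<^sup>+f. emeasure (M k) ((\<lambda>x. (x, f)) -` ?Q) \<partial>?R)"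
    by (rule emeasure_pair_measure_alt2[OF Q])
  also have "\<dots> = (\<integral>\<^sup>+f. emeasure (M k) (line_section S k f) \<partial>?R)"
    by (rule nn_integral_cong) (simp only: sections)
  finally show "emeasure (prod_measure_vec M) S = (\<integral>\<^sup>+f. emeasure (M k) (line_section S k f) \<partial>?R)" .
qed

lemma coordinate_box_borel:
  assumes "\<And>i. I i \<in> sets borel"
  shows "{x::real^'n::finite. \<forall>i. x$i \<in> I i} \<in> sets borel"
proof -
  have "(\<lambda>x::real^'n. x$i) -` I i \<in> sets borel" for i
    using measurable_sets[OF _ assms, of "\<lambda>x::real^'n. x$i" borel] by simp
  moreover have "{x::real^'n. \<forall>i. x$i \<in> I i} = (\<Inter>i. (\<lambda>x. x$i) -` I i)" by auto
  ultimately show ?thesis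
    by (auto intro: sets.countable_INT')
qed

lemma emeasure_prod_measure_vec_box:
  fixes M :: "'n::finite \<Rightarrow> real measure"
  assumes prob: "\<And>k. prob_space (M k)" and sets: "\<And>k. sets (M k) = sets borel"
    and I: "\<And>i. I i \<in> sets borel"
  shows "emeasure (prod_measure_vec M) {x. \<forall>i. x$i \<in> I i} = (\<Prod>i\<in>UNIV. emeasure (M i) (I i))"
proof -
  interpret product_sigma_finite M
    unfolding product_sigma_finite_def using prob prob_space_imp_sigma_finite by blast
  have space: "space (M i) = UNIV" for i
    using sets_eq_imp_space_eq[OF sets[of i]] by simp
  have "emeasure (prod_measure_vec M) {x. \<forall>i. x$i \<in> I i}
      = emeasure (PiM UNIV M) ((\<lambda>f. \<chi> i. f i) -` {x. \<forall>i. x$i \<in> I i} \<inter> space (PiM UNIV M))"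
    unfolding prod_measure_vec_def
    by (rule emeasure_distr[OF measurable_vec_lambda_PiM[OF sets] coordinate_box_borel[OF I]])
  also have "(\<lambda>f. \<chi> i. f i) -` {x. \<forall>i. x$i \<in> I i} \<inter> space (PiM UNIV M) = PiE UNIV I"
    by (auto simp: space_PiM PiE_def Pi_def space)
  also have "emeasure (PiM UNIV M) (PiE UNIV I) = (\<Prod>i\<in>UNIV. emeasure (M i) (I i))"
    by (rule emeasure_PiM) (use I sets in auto)
  finally show ?thesis .
qed

lemma prob_space_prod_density_measure:
  assumes "\<And>k. bounded_prob_density (g k)"
  shows "prob_space (prod_density_measure g)"
  using assms unfolding prod_density_measure_def bounded_prob_density_def
  by (intro prob_space_prod_measure_vec) auto

lemma sets_prod_density_measure [simp]: "sets (prod_density_measure g) = sets borel"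
  by (simp add: prod_density_measure_def)

section \<open>Bounded densities on the line\<close>

lemma Linf_norm_nonneg: "0 \<le> Linf_norm g"
proof -
  have "esssup lborel (\<lambda>x::real. 0::ereal) \<le> Linf_norm g"
    unfolding Linf_norm_def by (rule esssup_mono) auto
  then show ?thesis by (simp add: esssup_const)
qed

lemma bounded_prob_density_Linf_norm:
  assumes "bounded_prob_density g"
  shows "\<bar>Linf_norm g\<bar> \<noteq> \<infinity>"
    and "AE x in lborel. g x \<le> real_of_ereal (Linf_norm g)"
proof -
  show fin: "\<bar>Linf_norm g\<bar> \<noteq> \<infinity>"
    using assms Linf_norm_nonneg[of g] unfolding bounded_prob_density_def by auto
  then obtain L where L: "Linf_norm g = ereal L"
    by (cases "Linf_norm g") auto
  have "AE x in lborel. ereal \<bar>g x\<bar> \<le> Linf_norm g"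
    unfolding Linf_norm_def by (rule esssup_AE)
  then show "AE x in lborel. g x \<le> real_of_ereal (Linf_norm g)"
    by eventually_elim (simp add: L)
qed

lemma emeasure_density_interval_le:
  fixes g :: "real \<Rightarrow> real"
  assumes g: "g \<in> borel_measurable borel" and bound: "AE x in lborel. g x \<le> L"
    and "0 \<le> L" "a \<le> b"
  shows "emeasure (density lborel (\<lambda>x. ennreal (g x))) {a..b} \<le> ennreal (L * (b - a))"
proof -
  have "emeasure (density lborel (\<lambda>x. ennreal (g x))) {a..b} = (\<integral>\<^sup>+x. ennreal (g x) * indicator {a..b} x \<partial>lborel)"
    using g by (simp add: emeasure_density)
  also have "\<dots> \<le> (\<integral>\<^sup>+x. ennreal L * indicator {a..b} x \<partial>lborel)"
  proof (rule nn_integral_mono_AE)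
    show "AE x in lborel. ennreal (g x) * indicator {a..b} x \<le> ennreal L * indicator {a..b} x"
      using bound by eventually_elim (auto simp: indicator_def ennreal_leI)
  qed
  also have "\<dots> = ennreal (L * (b - a))"
    using assms by (simp add: nn_integral_cmult_indicator ennreal_mult)
  finally show ?thesis .
qed

text \<open>A convex subset of the line is an interval, so thickening it by \<open>e\<close> only adds
  two intervals of length \<open>e\<close> at its ends.\<close>
lemma emeasure_density_convex_thicken_le:
  fixes g :: "real \<Rightarrow> real"
  assumes g: "g \<in> borel_measurable borel" and bound: "AE x in lborel. g x \<le> L" and "0 \<le> L"
    and I: "convex I" "I \<in> sets borel" and "0 \<le> e"
  shows "emeasure (density lborel (\<lambda>x. ennreal (g x))) {y + t | y t. y \<in> I \<and> \<bar>t\<bar> \<le> e}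
     \<le> emeasure (density lborel (\<lambda>x. ennreal (g x))) I + ennreal (2 * e * L)"
proof -
  let ?N = "density lborel (\<lambda>x. ennreal (g x))"
  have "{y + t | y t. y \<in> I \<and> \<bar>t\<bar> \<le> e} \<subseteq> I \<union> {Inf I - e..Inf I} \<union> {Sup I..Sup I + e}"
  proof
    fix z assume "z \<in> {y + t | y t. y \<in> I \<and> \<bar>t\<bar> \<le> e}"
    then obtain y t where yt: "z = y + t" "y \<in> I" "\<bar>t\<bar> \<le> e" by auto
    consider "z \<in> I" | "\<forall>x\<in>I. z < x" | "\<forall>x\<in>I. x < z"
      using I(1) unfolding is_interval_convex_1[symmetric] is_interval_1 by (meson not_le)
    then show "z \<in> I \<union> {Inf I - e..Inf I} \<union> {Sup I..Sup I + e}"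
    proof cases
      case 2
      then have "bdd_below I"
        by (meson bdd_belowI less_imp_le)
      then have "z \<le> Inf I" "Inf I \<le> y"
        using 2 yt(2) by (auto intro: cInf_greatest cInf_lower less_imp_le)
      then show ?thesis using yt by auto
    next
      case 3
      then have "bdd_above I"
        by (meson bdd_aboveI less_imp_le)
      then have "Sup I \<le> z" "y \<le> Sup I"
        using 3 yt(2) by (auto intro: cSup_least cSup_upper less_imp_le)
      then show ?thesis using yt by auto
    qed simp
  qed
  then have "emeasure ?N {y + t | y t. y \<in> I \<and> \<bar>t\<bar> \<le> e}
      \<le> emeasure ?N (I \<union> {Inf I - e..Inf I} \<union> {Sup I..Sup I + e})"
    by (rule emeasure_mono) (use I in simp)
  also have "\<dots> \<le> emeasure ?N I + emeasure ?N {Inf I - e..Inf I} + emeasure ?N {Sup I..Sup I + e}"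
    using I by (intro order_trans[OF emeasure_subadditive] add_mono emeasure_subadditive) auto
  also have "\<dots> \<le> emeasure ?N I + ennreal (L * e) + ennreal (L * e)"
    using assms by (intro add_mono order_refl order_trans[OF emeasure_density_interval_le]) auto
  also have "\<dots> = emeasure ?N I + ennreal (2 * e * L)"
    using assms by (simp add: add.assoc ennreal_plus[symmetric] del: ennreal_plus)
  finally show ?thesis .
qed

section \<open>Thickening by coordinate boxes\<close>

definition coord_box :: "'n::finite set \<Rightarrow> real \<Rightarrow> (real^'n) set" where
  "coord_box K e = cbox (\<chi> i. if i \<in> K then -e else 0) (\<chi> i. if i \<in> K then e else 0)"

definition box_thicken :: "(real^'n::finite) set \<Rightarrow> 'n set \<Rightarrow> real \<Rightarrow> (real^'n) set" where
  "box_thicken C K e = (\<Union>c\<in>C. \<Union>v\<in>coord_box K e. {c + v})"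

lemma mem_coord_box: "v \<in> coord_box K e \<longleftrightarrow> (\<forall>i. (i \<in> K \<longrightarrow> \<bar>v$i\<bar> \<le> e) \<and> (i \<notin> K \<longrightarrow> v$i = 0))"
  unfolding coord_box_def mem_box_cart by (auto simp: abs_le_iff) (metis order.antisym)+

lemma box_thicken_empty [simp]:
  fixes C :: "(real^'n::finite) set"
  shows "box_thicken C {} e = C"
proof -
  have "coord_box {} e = {0::real^'n}"
    unfolding mem_coord_box set_eq_iff by (simp add: vec_eq_iff)
  then show ?thesis unfolding box_thicken_def by simp
qed

lemma box_thicken_insert:
  assumes "k \<notin> K"
  shows "box_thicken C (insert k K) e = box_thicken (box_thicken C K e) {k} e"
proof
  show "box_thicken C (insert k K) e \<subseteq> box_thicken (box_thicken C K e) {k} e"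
  proof
    fix x assume "x \<in> box_thicken C (insert k K) e"
    then obtain c v where cv: "c \<in> C" "v \<in> coord_box (insert k K) e" "x = c + v"
      unfolding box_thicken_def by auto
    define w where "w = (v$k) *\<^sub>R axis k (1::real)"
    have "v - w \<in> coord_box K e" "w \<in> coord_box {k} e"
      using cv(2) assms unfolding mem_coord_box w_def by (auto simp: axis_def)
    moreover have "x = (c + (v - w)) + w" using cv(3) by simp
    ultimately show "x \<in> box_thicken (box_thicken C K e) {k} e"
      unfolding box_thicken_def using cv(1) by blast
  qed
next
  show "box_thicken (box_thicken C K e) {k} e \<subseteq> box_thicken C (insert k K) e"
  proof
    fix x assume "x \<in> box_thicken (box_thicken C K e) {k} e"
    then obtain c v w where cvw: "c \<in> C" "v \<in> coord_box K e" "w \<in> coord_box {k} e" "x = c + v + w"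
      unfolding box_thicken_def by auto
    have "(v + w)$i = (if i = k then w$k else v$i)" for i
      using cvw(2,3) assms unfolding mem_coord_box by auto
    then have "v + w \<in> coord_box (insert k K) e"
      using cvw(2,3) unfolding mem_coord_box by auto
    then show "x \<in> box_thicken C (insert k K) e"
      unfolding box_thicken_def cvw(4) using cvw(1) by (auto simp: add.assoc)
  qed
qed

lemma box_thicken_mono: "C \<subseteq> D \<Longrightarrow> box_thicken C K e \<subseteq> box_thicken D K e"
  unfolding box_thicken_def by blast

lemma convex_box_thicken: "convex C \<Longrightarrow> convex (box_thicken C K e)"
  unfolding box_thicken_def coord_box_def by (intro convex_sums convex_box)

lemma closed_box_thicken: "closed C \<Longrightarrow> closed (box_thicken C K e)"
  unfolding box_thicken_def coord_box_def by (intro closed_compact_sums compact_cbox)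

lemma open_box_thicken: "open C \<Longrightarrow> open (box_thicken C K e)"
  unfolding box_thicken_def by (intro open_sums) simp

lemma subset_box_thicken: "0 \<le> e \<Longrightarrow> C \<subseteq> box_thicken C K e"
  unfolding box_thicken_def by (force simp: mem_coord_box)

lemma line_section_box_thicken_single:
  fixes C :: "(real^'n::finite) set"
  shows "line_section (box_thicken C {k} e) k f = {y + t | y t. y \<in> line_section C k f \<and> \<bar>t\<bar> \<le> e}"
proof -
  have coord: "v \<in> coord_box {k} e \<longleftrightarrow> (\<exists>t. v = t *\<^sub>R axis k 1 \<and> \<bar>t\<bar> \<le> e)" for v :: "real^'n"
    unfolding mem_coord_box by (auto simp: vec_eq_iff axis_def)
  have shift: "(\<chi> i. if i = k then y + t else f i) = (\<chi> i. if i = k then y else f i) + t *\<^sub>R axis k 1"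
    for y t :: real
    by (simp add: vec_eq_iff axis_def)
  show ?thesis
  proof safe
    fix x assume "x \<in> line_section (box_thicken C {k} e) k f"
    then obtain c t where ct: "(\<chi> i. if i = k then x else f i) = c + t *\<^sub>R axis k 1" "c \<in> C" "\<bar>t\<bar> \<le> e"
      unfolding line_section_def box_thicken_def by (auto simp: coord)
    then have "(\<chi> i. if i = k then x - t else f i) = c"
      using shift[of "x - t" t] by (metis add_right_cancel diff_add_cancel)
    with ct show "\<exists>y t. x = y + t \<and> y \<in> line_section C k f \<and> \<bar>t\<bar> \<le> e"
      unfolding line_section_def by (intro exI[of _ "x - t"] exI[of _ t]) auto
  next
    fix y t assume y: "y \<in> line_section C k f" and t: "\<bar>t\<bar> \<le> e"
    have "t *\<^sub>R axis k 1 \<in> coord_box {k} e"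
      using coord t by auto
    with y show "y + t \<in> line_section (box_thicken C {k} e) k f"
      unfolding line_section_def box_thicken_def shift mem_Collect_eq
      by (intro UN_I[where a="\<chi> i. if i = k then y else f i"] UN_I[where a="t *\<^sub>R axis k 1"]) auto
  qed
qed

lemma minkowski_enlarge_subset_box_thicken:
  fixes A :: "(real^'n::finite) set"
  assumes "0 \<le> e"
  shows "minkowski_enlarge A e \<subseteq> box_thicken A UNIV e"
proof
  fix x assume "x \<in> minkowski_enlarge A e"
  then obtain a b where ab: "x = a + e *\<^sub>R b" "a \<in> A" "norm b \<le> 1"
    unfolding minkowski_enlarge_def by auto
  have "\<bar>(e *\<^sub>R b)$i\<bar> \<le> e" for i
    using component_le_norm_cart[of b i] ab(3) assms
    by (simp add: abs_mult mult_left_le)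
  then have "e *\<^sub>R b \<in> coord_box UNIV e"
    by (simp add: mem_coord_box)
  with ab show "x \<in> box_thicken A UNIV e"
    unfolding box_thicken_def by blast
qed

lemma compact_minkowski_enlarge:
  assumes "compact A"
  shows "compact (minkowski_enlarge A e)"
proof -
  have "minkowski_enlarge A e = (\<Union>a\<in>A. \<Union>v\<in>(\<lambda>b. e *\<^sub>R b) ` cball 0 1. {a + v})"
    unfolding minkowski_enlarge_def by (auto simp: image_iff) (metis mem_cball_0)+
  also have "compact \<dots>"
    by (intro compact_sums' assms compact_scaling compact_cball)
  finally show ?thesis .
qed

section \<open>Outer Minkowski content\<close>

lemma measure_completion_le:
  assumes "finite_measure M" "X \<subseteq> Y" "Y \<in> sets M"
  shows "measure (completion M) X \<le> measure M Y"
proof (cases "X \<in> sets (completion M)")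
  case True
  interpret finite_measure M by (rule assms(1))
  have "emeasure (completion M) X \<le> emeasure (completion M) Y"
    using assms(2,3) by (intro emeasure_mono) simp_all
  also have "\<dots> = emeasure M Y"
    using assms(3) by simp
  finally show ?thesis
    unfolding measure_def by (rule enn2real_mono) (simp add: less_top[symmetric])
next
  case False
  then show ?thesis by (simp add: measure_notin_sets)
qed

lemma boundary_measure_le:
  assumes "\<forall>\<^sub>F e in at_right 0. measure (completion \<mu>) (minkowski_enlarge A e - A) \<le> e * c"
  shows "boundary_measure \<mu> A \<le> ereal c"
  unfolding boundary_measure_def
proof (rule Liminf_le)
  show "\<forall>\<^sub>F e in at_right 0. ereal (measure (completion \<mu>) (minkowski_enlarge A e - A) / e) \<le> ereal c"
    using assms eventually_at_right_less[of 0]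
    by eventually_elim (simp add: divide_le_eq mult.commute)
qed simp

lemma boundary_measure_ge:
  assumes "\<forall>\<^sub>F e in at_right 0. e * c \<le> measure (completion \<mu>) (minkowski_enlarge A e - A)"
  shows "ereal c \<le> boundary_measure \<mu> A"
  unfolding boundary_measure_def
proof (rule Liminf_bounded)
  show "\<forall>\<^sub>F e in at_right 0. ereal c \<le> ereal (measure (completion \<mu>) (minkowski_enlarge A e - A) / e)"
    using assms eventually_at_right_less[of 0]
    by eventually_elim (simp add: le_divide_eq mult.commute)
qed

section \<open>The upper bound\<close>

lemma emeasure_box_thicken_single_le:
  fixes M :: "'n::finite \<Rightarrow> real measure"
  assumes prob: "\<And>k. prob_space (M k)" and sets: "\<And>k. sets (M k) = sets borel"
    and C: "convex C" "C \<in> sets borel" "box_thicken C {k} e \<in> sets borel"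
    and fibre: "\<And>I. convex I \<Longrightarrow> I \<in> sets borel \<Longrightarrow>
      emeasure (M k) {y + t | y t. y \<in> I \<and> \<bar>t\<bar> \<le> e} \<le> emeasure (M k) I + c"
  shows "emeasure (prod_measure_vec M) (box_thicken C {k} e) \<le> emeasure (prod_measure_vec M) C + c"
proof -
  let ?R = "PiM (UNIV - {k}) M"
  interpret R: prob_space ?R by (rule prob_space_PiM) (use prob in auto)
  have "emeasure (prod_measure_vec M) (box_thicken C {k} e)
      = (\<integral>\<^sup>+f. emeasure (M k) (line_section (box_thicken C {k} e) k f) \<partial>?R)"
    by (rule emeasure_prod_measure_vec_line_sections[OF prob sets C(3)])
  also have "\<dots> \<le> (\<integral>\<^sup>+f. emeasure (M k) (line_section C k f) + c \<partial>?R)"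
    using C by (intro nn_integral_mono)
      (simp add: line_section_box_thicken_single fibre convex_line_section line_section_borel)
  also have "\<dots> = (\<integral>\<^sup>+f. emeasure (M k) (line_section C k f) \<partial>?R) + c"
    using borel_measurable_emeasure_line_section[OF prob sets C(2), where k=k]
    by (subst nn_integral_add) (auto simp: R.emeasure_space_1)
  also have "\<dots> = emeasure (prod_measure_vec M) C + c"
    using emeasure_prod_measure_vec_line_sections[OF prob sets C(2), where k=k] by simp
  finally show ?thesis .
qed

lemma emeasure_box_thicken_le:
  fixes M :: "'n::finite \<Rightarrow> real measure" and c :: "'n \<Rightarrow> ennreal"
  assumes prob: "\<And>k. prob_space (M k)" and sets: "\<And>k. sets (M k) = sets borel"
    and C: "convex C" "closed C \<or> open C"
    and fibre: "\<And>k I. convex I \<Longrightarrow> I \<in> sets borel \<Longrightarrow>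
      emeasure (M k) {y + t | y t. y \<in> I \<and> \<bar>t\<bar> \<le> e} \<le> emeasure (M k) I + c k"
  shows "emeasure (prod_measure_vec M) (box_thicken C K e) \<le> emeasure (prod_measure_vec M) C + (\<Sum>k\<in>K. c k)"
proof -
  let ?\<mu> = "prod_measure_vec M"
  have borel: "box_thicken C K' e \<in> sets borel" for K'
    using C by (auto intro: borel_closed borel_open closed_box_thicken open_box_thicken)
  have "finite K" by simp
  then show ?thesis
  proof (induction K rule: finite_induct)
    case empty
    then show ?case by simp
  next
    case (insert k K)
    have "emeasure ?\<mu> (box_thicken C (insert k K) e) = emeasure ?\<mu> (box_thicken (box_thicken C K e) {k} e)"
      by (simp only: box_thicken_insert[OF insert.hyps(2)])
    also have "\<dots> \<le> emeasure ?\<mu> (box_thicken C K e) + c k"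
    proof (rule emeasure_box_thicken_single_le[OF prob sets convex_box_thicken[OF C(1)] borel])
      show "box_thicken (box_thicken C K e) {k} e \<in> sets borel"
        using borel[of "insert k K"] by (simp only: box_thicken_insert[OF insert.hyps(2)])
    qed (rule fibre)
    also have "\<dots> \<le> emeasure ?\<mu> C + (\<Sum>k\<in>K. c k) + c k"
      using insert.IH by (rule add_right_mono)
    also have "\<dots> = emeasure ?\<mu> C + (\<Sum>k\<in>insert k K. c k)"
      using insert.hyps by (simp add: add_ac)
    finally show ?case .
  qed
qed

lemma measure_box_thicken_diff_le:
  fixes g :: "'n::finite \<Rightarrow> real \<Rightarrow> real"
  assumes bpd: "\<And>k. bounded_prob_density (g k)" and C: "convex C" "closed C \<or> open C"
    and "0 \<le> e"
  shows "measure (prod_density_measure g) (box_thicken C UNIV e - C)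
    \<le> 2 * e * (\<Sum>k\<in>UNIV. real_of_ereal (Linf_norm (g k)))"
proof -
  let ?\<mu> = "prod_density_measure g"
  let ?L = "\<lambda>k. real_of_ereal (Linf_norm (g k))"
  interpret prob_space ?\<mu> by (rule prob_space_prod_density_measure[OF bpd])
  have L: "0 \<le> ?L k" for k
    using Linf_norm_nonneg by (simp add: real_of_ereal_pos)
  have "emeasure ?\<mu> (box_thicken C UNIV e) \<le> emeasure ?\<mu> C + (\<Sum>k\<in>UNIV. ennreal (2 * e * ?L k))"
    unfolding prod_density_measure_def
  proof (rule emeasure_box_thicken_le[OF _ _ C])
    fix k and I :: "real set"
    assume "convex I" "I \<in> sets borel"
    with bpd[of k] L[of k] \<open>0 \<le> e\<close> show "emeasure (density lborel (\<lambda>x. ennreal (g k x))) {y + t | y t. y \<in> I \<and> \<bar>t\<bar> \<le> e}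
      \<le> emeasure (density lborel (\<lambda>x. ennreal (g k x))) I + ennreal (2 * e * ?L k)"
      by (intro emeasure_density_convex_thicken_le bounded_prob_density_Linf_norm)
        (auto simp: bounded_prob_density_def)
  qed (use bpd in \<open>auto simp: bounded_prob_density_def\<close>)
  then have "measure ?\<mu> (box_thicken C UNIV e) \<le> measure ?\<mu> C + 2 * e * (\<Sum>k\<in>UNIV. ?L k)"
    using L \<open>0 \<le> e\<close>
    by (simp add: emeasure_eq_measure sum_distrib_left sum_nonneg ennreal_plus[symmetric] del: ennreal_plus)
  moreover have "box_thicken C UNIV e \<in> sets ?\<mu>" "C \<in> sets ?\<mu>"
    using C by (auto intro: borel_closed borel_open closed_box_thicken open_box_thicken)
  ultimately show ?thesis
    using finite_measure_Diff[OF _ _ subset_box_thicken[OF \<open>0 \<le> e\<close>]] by simp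
qed

lemma closure_subset_box_thicken_interior:
  fixes A :: "(real^'n::finite) set"
  assumes "convex A" "interior A \<noteq> {}" "0 < d"
  shows "closure A \<subseteq> box_thicken (interior A) UNIV d"
proof
  fix x assume "x \<in> closure A"
  then have "x \<in> closure (interior A)"
    using convex_closure_interior[OF assms(1,2)] by simp
  then obtain y where y: "y \<in> interior A" "dist y x < d"
    using \<open>0 < d\<close> unfolding closure_approachable by blast
  have "\<bar>(x - y)$i\<bar> \<le> d" for i
    using component_le_norm_cart[of "x - y" i] y(2) by (simp add: dist_norm norm_minus_commute)
  then have "x - y \<in> coord_box UNIV d"
    by (simp add: mem_coord_box)
  moreover have "x \<in> {y + (x - y)}"
    by simp
  ultimately show "x \<in> box_thicken (interior A) UNIV d"
    using y(1) unfolding box_thicken_def by blast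
qed

lemma hyperplane_subset_box_thicken_halfspace:
  fixes a :: "real^'n::finite"
  assumes "a \<noteq> 0" "0 < d"
  shows "{x. a \<bullet> x = b} \<subseteq> box_thicken {x. a \<bullet> x < b} UNIV d - {x. a \<bullet> x < b}"
proof
  fix x assume x: "x \<in> {x. a \<bullet> x = b}"
  obtain k where k: "a$k \<noteq> 0"
    using assms(1) by (metis vec_eq_iff zero_index)
  define w where "w = (d * sgn (a$k)) *\<^sub>R axis k (1::real)"
  have "a \<bullet> (x - w) = b - d * \<bar>a$k\<bar>"
    using x by (simp add: w_def inner_diff_right inner_axis abs_sgn mult.commute mult.left_commute)
  then have "x - w \<in> {x. a \<bullet> x < b}"
    using \<open>0 < d\<close> k by simp
  moreover have "w \<in> coord_box UNIV d"
    using \<open>0 < d\<close> by (auto simp: w_def mem_coord_box axis_def abs_mult abs_sgn_eq)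
  ultimately have "(x - w) + w \<in> box_thicken {x. a \<bullet> x < b} UNIV d"
    unfolding box_thicken_def by blast
  then show "x \<in> box_thicken {x. a \<bullet> x < b} UNIV d - {x. a \<bullet> x < b}"
    using x by simp
qed

lemma convex_frontier_subset_box_thicken:
  fixes A :: "(real^'n::finite) set"
  assumes A: "convex A"
  obtains C where "convex C" "open C" "\<And>d. 0 < d \<Longrightarrow> frontier A \<subseteq> box_thicken C UNIV d - C"
proof (cases "interior A = {}")
  case False
  then show ?thesis
    using A closure_subset_box_thicken_interior[OF A False]
    by (intro that[of "interior A"]) (auto simp: convex_interior frontier_def)
next
  case True
  then obtain a b where a: "a \<noteq> 0" and "A \<subseteq> {x. a \<bullet> x = b}"
    using empty_interior_subset_hyperplane[OF A] by metis
  then have frontier: "frontier A \<subseteq> {x. a \<bullet> x = b}"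
    using closed_hyperplane closure_minimal frontier_def by blast
  show ?thesis
  proof (rule that[of "{x. a \<bullet> x < b}"])
    show "frontier A \<subseteq> box_thicken {x. a \<bullet> x < b} UNIV d - {x. a \<bullet> x < b}" if "0 < d" for d
      using frontier hyperplane_subset_box_thicken_halfspace[OF a that, of b] by blast
  qed (simp_all add: convex_halfspace_lt open_halfspace_lt)
qed

lemma measure_frontier_convex:
  fixes g :: "'n::finite \<Rightarrow> real \<Rightarrow> real" and A :: "(real^'n) set"
  assumes bpd: "\<And>k. bounded_prob_density (g k)" and A: "convex A"
  shows "measure (prod_density_measure g) (frontier A) = 0"
proof -
  let ?\<mu> = "prod_density_measure g"
  let ?L = "\<Sum>k\<in>UNIV. real_of_ereal (Linf_norm (g k))"
  interpret prob_space ?\<mu> by (rule prob_space_prod_density_measure[OF bpd])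
  obtain C where C: "convex C" "open C" "\<And>d. 0 < d \<Longrightarrow> frontier A \<subseteq> box_thicken C UNIV d - C"
    using convex_frontier_subset_box_thicken[OF A] by blast
  have "measure ?\<mu> (frontier A) \<le> 2 * d * ?L" if "0 < d" for d
  proof -
    have "measure ?\<mu> (frontier A) \<le> measure ?\<mu> (box_thicken C UNIV d - C)"
      using C \<open>0 < d\<close> by (intro finite_measure_mono) (auto intro: borel_open open_box_thicken)
    also have "\<dots> \<le> 2 * d * ?L"
      using C \<open>0 < d\<close> by (intro measure_box_thicken_diff_le[OF bpd]) auto
    finally show ?thesis .
  qed
  then have "\<forall>\<^sub>F d in at_right 0. measure ?\<mu> (frontier A) \<le> 2 * d * ?L"
    by (auto simp: eventually_at_right_less[THEN eventually_mono])
  moreover have "((\<lambda>d. 2 * d * ?L) \<longlongrightarrow> 0) (at_right 0)"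
    by (auto intro!: tendsto_eq_intros)
  ultimately have "measure ?\<mu> (frontier A) \<le> 0"
    by (intro tendsto_lowerbound[of "\<lambda>d. 2 * d * ?L"]) auto
  then show ?thesis
    by (simp add: order.antisym)
qed

lemma boundary_measure_convex_le:
  fixes g :: "'n::finite \<Rightarrow> real \<Rightarrow> real" and A :: "(real^'n) set"
  assumes bpd: "\<And>k. bounded_prob_density (g k)" and A: "convex A"
  shows "boundary_measure (prod_density_measure g) A \<le> 2 * (\<Sum>k\<in>UNIV. Linf_norm (g k))"
proof -
  let ?\<mu> = "prod_density_measure g"
  let ?L = "\<Sum>k\<in>UNIV. real_of_ereal (Linf_norm (g k))"
  interpret prob_space ?\<mu> by (rule prob_space_prod_density_measure[OF bpd])
  have closure: "convex (closure A)" "closed (closure A)"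
    using A by (auto simp: convex_closure)
  have "measure (completion ?\<mu>) (minkowski_enlarge A e - A) \<le> e * (2 * ?L)" if "0 < e" for e
  proof -
    let ?T = "box_thicken (closure A) UNIV e"
    have T: "?T \<in> sets ?\<mu>"
      using closure by (auto intro: borel_closed closed_box_thicken)
    have "minkowski_enlarge A e \<subseteq> ?T"
      using minkowski_enlarge_subset_box_thicken[of e A] box_thicken_mono[OF closure_subset, of A UNIV e]
        \<open>0 < e\<close> by auto
    then have "minkowski_enlarge A e - A \<subseteq> (?T - closure A) \<union> frontier A"
      using interior_subset by (auto simp: frontier_def)
    then have "measure (completion ?\<mu>) (minkowski_enlarge A e - A) \<le> measure ?\<mu> ((?T - closure A) \<union> frontier A)"
      using T by (intro measure_completion_le) auto
    also have "\<dots> \<le> measure ?\<mu> (?T - closure A) + measure ?\<mu> (frontier A)"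
      using T closure by (intro measure_Un_le) auto
    also have "\<dots> \<le> 2 * e * ?L + 0"
      using closure \<open>0 < e\<close>
      by (intro add_mono measure_box_thicken_diff_le[OF bpd] measure_frontier_convex[OF bpd A, THEN eq_refl]) auto
    finally show ?thesis by simp
  qed
  then have "boundary_measure ?\<mu> A \<le> ereal (2 * ?L)"
    by (intro boundary_measure_le) (auto simp: eventually_at_right_less[THEN eventually_mono])
  also have "ereal (2 * ?L) = 2 * (\<Sum>k\<in>UNIV. ereal (real_of_ereal (Linf_norm (g k))))"
    by simp
  also have "\<dots> = 2 * (\<Sum>k\<in>UNIV. Linf_norm (g k))"
    using bounded_prob_density_Linf_norm(1)[OF bpd] by (simp add: ereal_real)
  finally show ?thesis .
qed

section \<open>Sharpness\<close>

lemma emeasure_density_uniform: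
  "I \<in> sets borel \<Longrightarrow> emeasure (density lborel (\<lambda>x. ennreal (indicator {0..1} x))) I = emeasure lborel ({0..1::real} \<inter> I)"
  by (simp add: ennreal_indicator emeasure_restricted)

lemma Linf_norm_uniform_le: "Linf_norm (indicator {0..1::real}) \<le> 1"
  unfolding Linf_norm_def by (rule esssup_I) (auto simp: indicator_def)

lemma bounded_prob_density_uniform: "bounded_prob_density (indicator {0..1::real})"
  unfolding bounded_prob_density_def
proof (intro conjI allI)
  show "prob_space (density lborel (\<lambda>x. ennreal (indicator {0..1::real} x)))"
    by (rule prob_spaceI) (simp add: emeasure_density_uniform)
  show "Linf_norm (indicator {0..1::real}) < \<infinity>"
    using Linf_norm_uniform_le by (rule order.strict_trans1) simp
qed auto

definition cube_slab :: "real \<Rightarrow> real \<Rightarrow> 'n::finite \<Rightarrow> (real^'n) set" where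
  "cube_slab d e k = {x. \<forall>i. x$i \<in> (if i = k then {d - e..<d} \<union> {1 - d<..1 - d + e} else {d..1 - d})}"

lemma cube_slab_borel: "cube_slab d e k \<in> sets borel"
  unfolding cube_slab_def by (rule coordinate_box_borel) simp

lemma disjoint_family_cube_slab: "disjoint_family (cube_slab d e :: 'n::finite \<Rightarrow> (real^'n) set)"
  unfolding disjoint_family_on_def
proof (intro ballI impI)
  fix k l :: 'n assume "k \<noteq> l"
  have "x$k \<in> ({d - e..<d} \<union> {1 - d<..1 - d + e}) \<inter> {d..1 - d}"
    if "x \<in> cube_slab d e k" "x \<in> cube_slab d e l" for x
  proof -
    from that have "x$k \<in> (if k = k then {d - e..<d} \<union> {1 - d<..1 - d + e} else {d..1 - d})"
      "x$k \<in> (if k = l then {d - e..<d} \<union> {1 - d<..1 - d + e} else {d..1 - d})"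
      unfolding cube_slab_def by blast+
    with \<open>k \<noteq> l\<close> show ?thesis
      by simp
  qed
  then show "cube_slab d e k \<inter> cube_slab d e l = {}"
    by fastforce
qed

lemma cube_slab_subset_minkowski_enlarge_diff:
  fixes d e :: real and k :: "'n::finite"
  assumes "0 < e" "e \<le> d" "d \<le> 1 - d"
  defines "A \<equiv> cbox (\<chi> i. d) (\<chi> i. 1 - d) :: (real^'n) set"
  shows "cube_slab d e k \<subseteq> minkowski_enlarge A e - A"
proof
  fix x :: "real^'n"
  assume "x \<in> cube_slab d e k"
  then have x_in: "x$i \<in> (if i = k then {d - e..<d} \<union> {1 - d<..1 - d + e} else {d..1 - d})" for i
    by (simp add: cube_slab_def)
  have xk: "x$k \<in> {d - e..<d} \<union> {1 - d<..1 - d + e}"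
    using x_in[of k] by simp
  have xi: "x$i \<in> {d..1 - d}" if "i \<noteq> k" for i
    using x_in[of i] that by simp
  note x = xk xi
  define p where "p = (if x$k < d then d else 1 - d)"
  define a where "a = (\<chi> i. if i = k then p else x$i)"
  define b where "b = ((x$k - p) / e) *\<^sub>R axis k (1::real)"
  have "a \<in> A"
    using x assms(3) by (auto simp: A_def a_def p_def mem_box_cart)
  moreover have "b \<in> cball 0 1"
    using x assms(1,3) by (auto simp: b_def p_def abs_div)
  moreover have "x = a + e *\<^sub>R b"
    using assms(1) by (simp add: a_def b_def vec_eq_iff axis_def)
  moreover have "x \<notin> A"
    using x by (auto simp: A_def mem_box_cart intro!: exI[of _ k])
  ultimately show "x \<in> minkowski_enlarge A e - A"
    unfolding minkowski_enlarge_def by blast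
qed

lemma emeasure_uniform_cube_slab:
  fixes d e :: real and k :: "'n::finite"
  assumes d: "0 < d" "d < 1/2" and e: "0 < e" "e \<le> d"
  shows "emeasure (prod_density_measure (\<lambda>_::'n. indicator {0..1})) (cube_slab d e k)
    = ennreal (2 * e * (1 - 2 * d) ^ (CARD('n) - 1))"
proof -
  let ?U = "density lborel (\<lambda>x. ennreal (indicator {0..1::real} x))"
  define J where "J = {d - e..<d} \<union> {1 - d<..1 - d + e}"
  have "emeasure ?U J = emeasure lborel ({0..1} \<inter> J)"
    by (rule emeasure_density_uniform) (simp add: J_def)
  also have "{0..1} \<inter> J = J"
    using d e by (auto simp: J_def)
  also have "emeasure lborel J = emeasure lborel {d - e..<d} + emeasure lborel {1 - d<..1 - d + e}"
    unfolding J_def by (rule plus_emeasure[symmetric]) (use d e in auto)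
  also have "\<dots> = ennreal (2 * e)"
    using e by (simp add: ennreal_plus[symmetric] del: ennreal_plus)
  finally have UJ: "emeasure ?U J = ennreal (2 * e)" .
  have UI: "emeasure ?U {d..1 - d} = ennreal (1 - 2 * d)"
    using d by (simp add: emeasure_density_uniform)
  have "emeasure (prod_density_measure (\<lambda>_::'n. indicator {0..1})) (cube_slab d e k)
      = (\<Prod>i\<in>UNIV. emeasure ?U (if i = k then J else {d..1 - d}))"
    unfolding cube_slab_def J_def[symmetric] prod_density_measure_def
    by (rule emeasure_prod_measure_vec_box)
      (use bounded_prob_density_uniform in \<open>auto simp: bounded_prob_density_def J_def\<close>)
  also have "\<dots> = (\<Prod>i\<in>UNIV. if i = k then ennreal (2 * e) else ennreal (1 - 2 * d))"
    by (rule prod.cong) (auto simp: UJ UI)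
  also have "\<dots> = ennreal (2 * e) * ennreal (1 - 2 * d) ^ (CARD('n) - 1)"
    by (subst prod_gen_delta) auto
  also have "\<dots> = ennreal (2 * e * (1 - 2 * d) ^ (CARD('n) - 1))"
    using d e by (simp add: ennreal_power ennreal_mult)
  finally show ?thesis .
qed

lemma boundary_measure_uniform_cube_ge:
  fixes d :: real
  assumes d: "0 < d" "d < 1/2"
  defines "A \<equiv> cbox (\<chi> i. d) (\<chi> i. 1 - d) :: (real^'n::finite) set"
  shows "ereal (2 * CARD('n) * (1 - 2 * d) ^ (CARD('n) - 1))
    \<le> boundary_measure (prod_density_measure (\<lambda>_::'n. indicator {0..1})) A"
proof -
  let ?\<mu> = "prod_density_measure (\<lambda>_::'n. indicator {0..1::real})"
  let ?c = "(1 - 2 * d) ^ (CARD('n) - 1)"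
  interpret prob_space ?\<mu>
    by (rule prob_space_prod_density_measure) (rule bounded_prob_density_uniform)
  have slabs: "e * (2 * CARD('n) * ?c) \<le> measure (completion ?\<mu>) (minkowski_enlarge A e - A)"
    if e: "0 < e" "e \<le> d" for e
  proof -
    have enlarge: "minkowski_enlarge A e - A \<in> sets ?\<mu>"
      unfolding sets_prod_density_measure A_def
      by (intro sets.Diff borel_closed compact_imp_closed compact_minkowski_enlarge compact_cbox)
    have "emeasure ?\<mu> (\<Union>k. cube_slab d e k) = (\<Sum>k\<in>UNIV. emeasure ?\<mu> (cube_slab d e k))"
      using disjoint_family_cube_slab cube_slab_borel by (intro sum_emeasure[symmetric]) auto
    also have "\<dots> = ennreal (e * (2 * CARD('n) * ?c))"
      using d e by (simp add: emeasure_uniform_cube_slab ennreal_of_nat_eq_real_of_nat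
          ennreal_mult[symmetric] mult_ac)
    finally have "e * (2 * CARD('n) * ?c) = measure ?\<mu> (\<Union>k. cube_slab d e k)"
      using d e by (simp add: measure_def)
    also have "\<dots> \<le> measure ?\<mu> (minkowski_enlarge A e - A)"
      using cube_slab_subset_minkowski_enlarge_diff[of e d] d e enlarge
      by (intro finite_measure_mono) (auto simp: A_def)
    also have "\<dots> = measure (completion ?\<mu>) (minkowski_enlarge A e - A)"
      using enlarge by simp
    finally show ?thesis .
  qed
  have "\<forall>\<^sub>F e in at_right 0. 0 < e \<and> e \<le> d"
    unfolding eventually_at_right_field using d by (intro exI[of _ d]) auto
  then have "\<forall>\<^sub>F e in at_right 0. e * (2 * CARD('n) * ?c) \<le> measure (completion ?\<mu>) (minkowski_enlarge A e - A)"
    by eventually_elim (use slabs in auto)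
  then show ?thesis
    by (rule boundary_measure_ge)
qed

lemma convex_body_cube:
  assumes "d < 1/2"
  shows "convex_body (cbox (\<chi> i. d) (\<chi> i. 1 - d) :: (real^'n::finite) set)"
proof -
  have "(\<chi> i. 1/2) \<in> box (\<chi> i. d) (\<chi> i::'n. 1 - d)"
    using assms by (simp add: mem_box_cart)
  then show ?thesis
    unfolding convex_body_def by (auto simp: convex_box interior_cbox)
qed

text \<open>Letting the inner cube \<open>[d, 1 - d]\<^sup>n\<close> grow to the unit cube.\<close>
lemma Gamma_uniform_ge:
  "ereal (2 * CARD('n)) \<le> Gamma (prod_density_measure (\<lambda>_::'n::finite. indicator {0..1::real}))"
proof (rule tendsto_upperbound)
  let ?f = "\<lambda>d::real. 2 * CARD('n) * (1 - 2 * d) ^ (CARD('n) - 1)"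
  have "(?f \<longlongrightarrow> ?f 0) (at_right 0)"
    by (intro tendsto_intros)
  then show "((\<lambda>d. ereal (?f d)) \<longlongrightarrow> ereal (2 * CARD('n))) (at_right 0)"
    by simp
  have "\<forall>\<^sub>F d in at_right 0. 0 < d \<and> d < (1/2 :: real)"
    unfolding eventually_at_right_field by (intro exI[of _ "1/2"]) auto
  then show "\<forall>\<^sub>F d in at_right 0. ereal (?f d) \<le> Gamma (prod_density_measure (\<lambda>_::'n. indicator {0..1}))"
  proof eventually_elim
    case (elim d)
    then show ?case
      unfolding Gamma_def
      by (intro order_trans[OF boundary_measure_uniform_cube_ge] SUP_upper) (auto intro: convex_body_cube)
  qed
qed simp

lemma Gamma_uniform_gt:
  fixes c :: real
  assumes "c < 2"
  shows "ereal c * (\<Sum>k\<in>(UNIV::'n::finite set). Linf_norm (indicator {0..1::real}))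
    < Gamma (prod_density_measure (\<lambda>_::'n. indicator {0..1::real}))"
proof -
  obtain L where L: "Linf_norm (indicator {0..1::real}) = ereal L" "0 \<le> L" "L \<le> 1"
    using Linf_norm_nonneg[of "indicator {0..1}"] Linf_norm_uniform_le
    by (cases "Linf_norm (indicator {0..1::real})") auto
  have "c * L < 2"
  proof (cases "c \<le> 0")
    case True
    then have "c * L \<le> 0"
      using L(2) by (simp add: mult_nonpos_nonneg)
    then show ?thesis by simp
  next
    case False
    then have "c * L \<le> c" using L(3) by (simp add: mult_left_le)
    then show ?thesis using assms by simp
  qed
  then have "ereal c * (\<Sum>k\<in>(UNIV::'n set). Linf_norm (indicator {0..1::real})) < ereal (2 * CARD('n))"
    using L(1) by (simp add: mult.left_commute)
  also have "\<dots> \<le> Gamma (prod_density_measure (\<lambda>_::'n. indicator {0..1::real}))"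
    by (rule Gamma_uniform_ge)
  finally show ?thesis .
qed

theorem theorem5p10:
  fixes g :: "'n::finite \<Rightarrow> real \<Rightarrow> real"
  assumes "\<And>k. bounded_prob_density (g k)"
  shows "(\<forall>A :: (real^'n) set. convex A \<longrightarrow>
            boundary_measure (prod_density_measure g) A \<le> 2 * (\<Sum>k\<in>UNIV. Linf_norm (g k)))
       \<and> Gamma (prod_density_measure g) \<le> 2 * (\<Sum>k\<in>UNIV. Linf_norm (g k))
       \<and> (\<forall>c::real. c < 2 \<longrightarrow>
            (\<exists>h :: 'n \<Rightarrow> real \<Rightarrow> real. (\<forall>k. bounded_prob_density (h k)) \<and>
               Gamma (prod_density_measure h) > ereal c * (\<Sum>k\<in>UNIV. Linf_norm (h k))))"
proof -
  have convex: "\<forall>A :: (real^'n) set. convex A \<longrightarrow>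
      boundary_measure (prod_density_measure g) A \<le> 2 * (\<Sum>k\<in>UNIV. Linf_norm (g k))"
    by (intro allI impI boundary_measure_convex_le[OF assms])
  then have Gamma: "Gamma (prod_density_measure g) \<le> 2 * (\<Sum>k\<in>UNIV. Linf_norm (g k))"
    unfolding Gamma_def convex_body_def by (auto intro!: SUP_least)
  have sharp: "\<exists>h :: 'n \<Rightarrow> real \<Rightarrow> real. (\<forall>k. bounded_prob_density (h k)) \<and>
      Gamma (prod_density_measure h) > ereal c * (\<Sum>k\<in>UNIV. Linf_norm (h k))" if "c < 2" for c
  proof (intro exI[of _ "\<lambda>_. indicator {0..1}"] conjI allI)
    show "bounded_prob_density (indicator {0..1::real})"
      by (rule bounded_prob_density_uniform)
    show "Gamma (prod_density_measure (\<lambda>_::'n. indicator {0..1::real}))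
      > ereal c * (\<Sum>k\<in>(UNIV::'n set). Linf_norm (indicator {0..1::real}))"
      by (rule Gamma_uniform_gt[OF that])
  qed
  show ?thesis
    by (intro conjI convex Gamma allI impI sharp)
qed

end
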